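(* The standard parabolic faces of $\mathbf P$ are in bijection with the connected subdiagrams of the extended Dynkin diagram that contain $\{-\lambda\}$, via $F_I\mapsto$ the connected component containing $\{-\lambda\}$ of the induced subdiagram on $\{\alpha_j\mid j\notin I\}\cup\{-\lambda\}$ (whose set of simple-root vertices is indexed by $\overline I^0$). This bijection is an isomorphism of posets, where faces and subdiagrams are both ordered by inclusion.
   Context: Let $\mathfrak g$ be a finite-dimensional complex simple Lie algebra with root system $\Phi$, base $\Pi=\{\alpha_1,\dots,\alpha_n\}$, Weyl group $W$; $E$ is the real span of $\Pi$ with $W$-invariant inner product $(\cdot,\cdot)$. Fix a dominant integral weight $\lambda=\sum_i m_i\alpha_i$; for $x\in E$, $c_i(x)$ is the coefficient of $\alpha_i$ in $x$. Weight polytope $\mathbf P=\mathrm{conv}(W\lambda)$. For $I\subseteq\{1,\dots,n\}$, $F_I=\{x\in\mathbf P\mid c_i(x)=m_i\ \forall i\in I\}$ ($F_\emptyset=\mathbf P$); a face of $\mathbf P$ is standard parabolic if it equals $F_I$ for some $I$ (i.e. it is an intersection of the coordinate faces $F_{\{i\}}$). The extended Dynkin diagram is the Dynkin diagram of $\Pi$ with an additional node $\{-\lambda\}$ joined by a single edge to $\alpha_i$ iff $(\lambda,\alpha_i)>0$; subdiagrams are induced subdiagrams on vertex subsets. $\overline I^0$ denotes the set of indices $j$ with $\alpha_j$ in the connected component containing $\{-\lambda\}$ of the induced subdiagram on $\{\alpha_j\mid j\notin I\}\cup\{-\lambda\}$. *)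

theory Defs
  imports "HOL-Analysis.Analysis"
begin

definition refl :: "'a::real_inner \<Rightarrow> 'a \<Rightarrow> 'a" where
  "refl a x = x - (2 * (x \<bullet> a) / (a \<bullet> a)) *\<^sub>R a"

text \<open>Irreducible reduced crystallographic root system spanning the ambient space
  (= root system of a finite-dimensional complex simple Lie algebra).\<close>
definition irreducible_root_system :: "'a::euclidean_space set \<Rightarrow> bool" where
  "irreducible_root_system Phi \<longleftrightarrow>
     finite Phi \<and> Phi \<noteq> {} \<and> 0 \<notin> Phi \<and> span Phi = UNIV \<and>
     (\<forall>a\<in>Phi. refl a ` Phi = Phi) \<and>
     (\<forall>a\<in>Phi. \<forall>b\<in>Phi. 2 * (b \<bullet> a) / (a \<bullet> a) \<in> \<int>) \<and>
     (\<forall>a\<in>Phi. \<forall>c::real. c *\<^sub>R a \<in> Phi \<longrightarrow> c = 1 \<or> c = -1) \<and>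
     (\<forall>A B. A \<union> B = Phi \<and> A \<inter> B = {} \<and> (\<forall>a\<in>A. \<forall>b\<in>B. a \<bullet> b = 0)
        \<longrightarrow> A = {} \<or> B = {})"

definition is_base :: "'a::euclidean_space set \<Rightarrow> ('i::finite \<Rightarrow> 'a) \<Rightarrow> bool" where
  "is_base Phi alpha \<longleftrightarrow>
     inj alpha \<and> range alpha \<subseteq> Phi \<and> independent (range alpha) \<and>
     (\<forall>b\<in>Phi. \<exists>c::'i \<Rightarrow> int. b = (\<Sum>i\<in>UNIV. of_int (c i) *\<^sub>R alpha i) \<and>
        ((\<forall>i. c i \<ge> 0) \<or> (\<forall>i. c i \<le> 0)))"

inductive_set weyl_group :: "'a::real_inner set \<Rightarrow> ('a \<Rightarrow> 'a) set" for Phi where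
  weyl_id: "id \<in> weyl_group Phi"
| weyl_step: "w \<in> weyl_group Phi \<Longrightarrow> a \<in> Phi \<Longrightarrow> refl a \<circ> w \<in> weyl_group Phi"

definition dominant_integral :: "('i \<Rightarrow> 'a::real_inner) \<Rightarrow> 'a \<Rightarrow> bool" where
  "dominant_integral alpha lam \<longleftrightarrow>
     (\<forall>i. 2 * (lam \<bullet> alpha i) / (alpha i \<bullet> alpha i) \<in> \<nat>)"

definition coeff_of :: "('i::finite \<Rightarrow> 'a::real_vector) \<Rightarrow> 'a \<Rightarrow> 'i \<Rightarrow> real" where
  "coeff_of alpha x = (THE c. x = (\<Sum>j\<in>UNIV. c j *\<^sub>R alpha j))"

definition weight_polytope :: "'a::real_inner set \<Rightarrow> 'a \<Rightarrow> 'a set" where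
  "weight_polytope Phi lam = convex hull ((\<lambda>w. w lam) ` weyl_group Phi)"

definition F_face :: "'a::euclidean_space set \<Rightarrow> ('i::finite \<Rightarrow> 'a) \<Rightarrow> 'a \<Rightarrow> 'i set \<Rightarrow> 'a set" where
  "F_face Phi alpha lam I =
     {x \<in> weight_polytope Phi lam. \<forall>i\<in>I. coeff_of alpha x i = coeff_of alpha lam i}"

definition std_parabolic_faces :: "'a::euclidean_space set \<Rightarrow> ('i::finite \<Rightarrow> 'a) \<Rightarrow> 'a \<Rightarrow> 'a set set" where
  "std_parabolic_faces Phi alpha lam =
     {F. F face_of weight_polytope Phi lam \<and> (\<exists>I. F = F_face Phi alpha lam I)}"

text \<open>Vertices: \<open>None\<close> is the extra node \<open>{-\<lambda>}\<close>, \<open>Some i\<close> is \<open>alpha i\<close>.\<close>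
definition ext_adj :: "('i \<Rightarrow> 'a::real_inner) \<Rightarrow> 'a \<Rightarrow> 'i option \<Rightarrow> 'i option \<Rightarrow> bool" where
  "ext_adj alpha lam u v =
     (case (u, v) of
        (Some i, Some j) \<Rightarrow> i \<noteq> j \<and> alpha i \<bullet> alpha j \<noteq> 0
      | (None, Some j) \<Rightarrow> lam \<bullet> alpha j > 0
      | (Some i, None) \<Rightarrow> lam \<bullet> alpha i > 0
      | (None, None) \<Rightarrow> False)"

definition induced_rel :: "('v \<Rightarrow> 'v \<Rightarrow> bool) \<Rightarrow> 'v set \<Rightarrow> ('v \<times> 'v) set" where
  "induced_rel adj S = {(u, v). u \<in> S \<and> v \<in> S \<and> adj u v}"

definition connected_sub :: "('v \<Rightarrow> 'v \<Rightarrow> bool) \<Rightarrow> 'v set \<Rightarrow> bool" where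
  "connected_sub adj S \<longleftrightarrow> S \<noteq> {} \<and> (\<forall>u\<in>S. \<forall>v\<in>S. (u, v) \<in> (induced_rel adj S)\<^sup>*)"

definition component_of :: "('v \<Rightarrow> 'v \<Rightarrow> bool) \<Rightarrow> 'v set \<Rightarrow> 'v \<Rightarrow> 'v set" where
  "component_of adj S v = {w \<in> S. (v, w) \<in> (induced_rel adj S)\<^sup>*}"

definition conn_subdiagrams_ext :: "('i \<Rightarrow> 'a::real_inner) \<Rightarrow> 'a \<Rightarrow> 'i option set set" where
  "conn_subdiagrams_ext alpha lam = {S. None \<in> S \<and> connected_sub (ext_adj alpha lam) S}"

definition ext_component :: "('i \<Rightarrow> 'a::real_inner) \<Rightarrow> 'a \<Rightarrow> 'i set \<Rightarrow> 'i option set" where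
  "ext_component alpha lam I =
     component_of (ext_adj alpha lam) (insert None (Some ` (- I))) None"

end

theory Submission
  imports Defs
begin

text \<open>
  Every point of the weight polytope lies below \<open>\<lambda>\<close> in the root order: \<open>\<lambda> - w \<lambda>\<close> is a
  nonnegative combination of simple roots, by induction along a reduced word of \<open>w\<close>, because
  the last letter of a reduced word is sent to a positive root. Hence each \<open>F_I\<close> is a face,
  cut out by \<open>\<Sum>i\<in>I. c\<^sub>i \<le> \<Sum>i\<in>I. m\<^sub>i\<close>.

  Let \<open>K\<close> index the simple roots in the component of \<open>{-\<lambda>}\<close> and \<open>L\<close> the indices outside
  \<open>I \<union> K\<close>. Both \<open>\<lambda>\<close> and the \<open>\<alpha>\<^sub>k\<close>, \<open>k \<in> K\<close>, are orthogonal to every \<open>\<alpha>\<^sub>l\<close>, \<open>l \<in> L\<close>,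
  so the parabolic subgroup \<open>W\<^sub>L\<close> moves only the \<open>L\<close>-part of \<open>\<lambda> - x\<close> for \<open>x \<in> F_I\<close>;
  that part keeps nonnegative coefficients along its \<open>W\<^sub>L\<close>-orbit while the orbit sums to zero,
  so it vanishes. Thus every coordinate outside \<open>K\<close> is constant on \<open>F_I\<close>. Conversely each
  \<open>c\<^sub>k\<close> with \<open>k \<in> K\<close> drops somewhere on \<open>F_I\<close>, by reflecting successively along a path from
  \<open>{-\<lambda>}\<close> to \<open>\<alpha>\<^sub>k\<close>. Therefore \<open>F_I \<subseteq> F_J\<close> iff the component for \<open>I\<close> lies in
  the one for \<open>J\<close>.
\<close>

section \<open>Reflections and Weyl groups\<close>

lemma linear_refl: "linear (refl a)"
  unfolding refl_def
  by (rule linearI) (auto simp: algebra_simps inner_add_left add_divide_distrib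
      scaleR_add_left diff_divide_distrib)

lemma inner_refl: "refl a x \<bullet> refl a y = x \<bullet> y"
proof (cases "a = 0")
  case False
  then have "a \<bullet> a \<noteq> 0" by simp
  then show ?thesis unfolding refl_def
    by (simp add: inner_diff_left inner_diff_right inner_commute field_simps power2_eq_square)
qed (simp add: refl_def)

lemma refl_refl: "refl a (refl a x) = x"
proof (cases "a = 0")
  case False
  then have "a \<bullet> a \<noteq> 0" by simp
  then show ?thesis unfolding refl_def by (simp add: inner_diff_left algebra_simps)
qed (simp add: refl_def)

lemma refl_self: "a \<noteq> 0 \<Longrightarrow> refl a a = - a"
  unfolding refl_def by (simp add: scaleR_2[symmetric] algebra_simps)

lemma refl_orthogonal: "x \<bullet> a = 0 \<Longrightarrow> refl a x = x"
  unfolding refl_def by simp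

lemma orthogonal_if_refl_fixed: "refl a x = x \<Longrightarrow> a \<noteq> 0 \<Longrightarrow> x \<bullet> a = 0"
  unfolding refl_def by auto

lemma refl_uminus: "refl (- a) = refl a"
  unfolding refl_def by (auto simp: fun_eq_iff)

lemma refl_conjugate:
  assumes "linear w" "\<And>x y. w x \<bullet> w y = x \<bullet> y"
  shows "refl (w a) (w x) = w (refl a x)"
  unfolding refl_def using assms by (simp add: linear_diff linear_scale)

lemma weyl_group_mono: "w \<in> weyl_group A \<Longrightarrow> A \<subseteq> B \<Longrightarrow> w \<in> weyl_group B"
  by (induction rule: weyl_group.induct) (auto intro: weyl_group.intros)

lemma weyl_group_comp: "w \<in> weyl_group A \<Longrightarrow> v \<in> weyl_group A \<Longrightarrow> w \<circ> v \<in> weyl_group A"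
  by (induction rule: weyl_group.induct) (auto simp: o_assoc[symmetric] intro: weyl_group.intros)

lemma refl_in_weyl_group: "a \<in> A \<Longrightarrow> refl a \<in> weyl_group A"
  using weyl_step[OF weyl_id] by fastforce

lemma weyl_group_isometry:
  assumes "w \<in> weyl_group A"
  shows "linear w" "w x \<bullet> w y = x \<bullet> y"
  using assms
  by (induction arbitrary: x y rule: weyl_group.induct)
    (auto simp: linear_compose[OF _ linear_refl] inner_refl linear_id[unfolded id_def] id_def)

lemma weyl_group_image_subset:
  assumes "w \<in> weyl_group A" "A \<subseteq> B" "\<And>a. a \<in> B \<Longrightarrow> refl a ` B \<subseteq> B"
  shows "w ` B \<subseteq> B"
  using assms(1) by induction (use assms(2,3) in \<open>auto simp: image_subset_iff\<close>)

lemma weyl_group_fixes_orthogonal: "w \<in> weyl_group A \<Longrightarrow> \<forall>a\<in>A. y \<bullet> a = 0 \<Longrightarrow> w y = y"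
  by (induction rule: weyl_group.induct) (auto simp: refl_orthogonal)

lemma weyl_group_span_closed: "w \<in> weyl_group A \<Longrightarrow> y \<in> span A \<Longrightarrow> w y \<in> span A"
  by (induction rule: weyl_group.induct) (auto simp: refl_def intro: span_diff span_scale span_base)

section \<open>Coordinates with respect to a basis\<close>

locale simple_coordinates =
  fixes alpha :: "'i::finite \<Rightarrow> 'a::euclidean_space"
  assumes inj_alpha: "inj alpha"
    and independent_alpha: "independent (range alpha)"
    and span_alpha: "span (range alpha) = UNIV"
begin

abbreviation c :: "'a \<Rightarrow> 'i \<Rightarrow> real" where "c \<equiv> coeff_of alpha"

lemma ex_coordinates: "\<exists>u. x = (\<Sum>j\<in>UNIV. u j *\<^sub>R alpha j)"
proof -
  have "x \<in> span (range alpha)" using span_alpha by auto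
  then obtain u where "x = (\<Sum>v\<in>range alpha. u v *\<^sub>R v)"
    using span_finite[of "range alpha"] by auto
  also have "\<dots> = (\<Sum>j\<in>UNIV. u (alpha j) *\<^sub>R alpha j)"
    by (simp add: sum.reindex[OF inj_alpha])
  finally show ?thesis by (rule exI[where x="\<lambda>j. u (alpha j)"])
qed

lemma coordinates_unique:
  assumes "(\<Sum>j\<in>UNIV. u j *\<^sub>R alpha j) = (\<Sum>j\<in>UNIV. v j *\<^sub>R alpha j)"
  shows "u = v"
proof (rule ccontr)
  assume "u \<noteq> v"
  then obtain j where j: "u j \<noteq> v j" by auto
  define e where "e y = u (inv alpha y) - v (inv alpha y)" for y
  have "(\<Sum>y\<in>range alpha. e y *\<^sub>R y) = (\<Sum>j\<in>UNIV. (u j - v j) *\<^sub>R alpha j)"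
    by (simp add: sum.reindex[OF inj_alpha] e_def inv_f_f[OF inj_alpha])
  also have "\<dots> = 0" using assms by (simp add: scaleR_diff_left sum_subtractf)
  finally have "(\<Sum>y\<in>range alpha. e y *\<^sub>R y) = 0" .
  moreover have "e (alpha j) \<noteq> 0" using j by (simp add: e_def inv_f_f[OF inj_alpha])
  ultimately have "dependent (range alpha)"
    using dependent_finite[of "range alpha"] by auto
  then show False using independent_alpha by simp
qed

lemma coeff_of_eqI: "x = (\<Sum>j\<in>UNIV. u j *\<^sub>R alpha j) \<Longrightarrow> c x = u"
  unfolding coeff_of_def by (rule the_equality) (auto intro: coordinates_unique)

lemma coeff_of_repr: "x = (\<Sum>j\<in>UNIV. c x j *\<^sub>R alpha j)"
  using ex_coordinates coeff_of_eqI by metis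

lemma coeff_of_add: "c (x + y) = (\<lambda>j. c x j + c y j)"
  by (rule coeff_of_eqI) (subst coeff_of_repr[of x], subst coeff_of_repr[of y],
      simp add: scaleR_add_left sum.distrib)

lemma coeff_of_scaleR: "c (r *\<^sub>R x) = (\<lambda>j. r * c x j)"
  by (rule coeff_of_eqI) (subst coeff_of_repr[of x], simp add: scaleR_sum_right)

lemma coeff_of_diff: "c (x - y) = (\<lambda>j. c x j - c y j)"
  by (rule coeff_of_eqI) (subst coeff_of_repr[of x], subst coeff_of_repr[of y],
      simp add: scaleR_diff_left sum_subtractf)

lemma coeff_of_0: "c 0 = (\<lambda>j. 0)"
  by (rule coeff_of_eqI) simp

lemma coeff_of_sum: "finite A \<Longrightarrow> c (\<Sum>a\<in>A. f a) = (\<lambda>j. \<Sum>a\<in>A. c (f a) j)"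
  by (induction A rule: finite_induct) (auto simp: coeff_of_0 coeff_of_add)

lemma coeff_of_alpha: "c (alpha k) = (\<lambda>j. if j = k then 1 else 0)"
  by (rule coeff_of_eqI) (simp add: if_distrib[of "\<lambda>r. r *\<^sub>R _"] cong: if_cong)

lemma coeff_of_eq_inner: "\<exists>w. \<forall>x. c x j = w \<bullet> x"
proof -
  have "c x j = (\<Sum>b\<in>Basis. c b j *\<^sub>R b) \<bullet> x" for x
  proof -
    have "c x j = c (\<Sum>b\<in>Basis. (x \<bullet> b) *\<^sub>R b) j" by (simp add: euclidean_representation)
    also have "\<dots> = (\<Sum>b\<in>Basis. (x \<bullet> b) * c b j)" by (simp add: coeff_of_sum coeff_of_scaleR)
    finally show ?thesis by (simp add: inner_sum_right inner_commute mult.commute)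
  qed
  then show ?thesis by blast
qed

lemma inner_eq_coeff_sum: "x \<bullet> y = (\<Sum>j\<in>UNIV. c x j * (alpha j \<bullet> y))"
  by (subst coeff_of_repr[of x]) (simp add: inner_sum_left)

definition in_pos_cone :: "'a \<Rightarrow> bool" where
  "in_pos_cone x \<longleftrightarrow> (\<forall>j. c x j \<ge> 0)"

definition height :: "'a \<Rightarrow> real" where
  "height x = (\<Sum>j\<in>UNIV. c x j)"

lemma in_pos_cone_alpha: "in_pos_cone (alpha i)"
  unfolding in_pos_cone_def by (simp add: coeff_of_alpha)

end

section \<open>Simple roots and reduced words\<close>

locale root_base =
  fixes Phi :: "'a::euclidean_space set" and alpha :: "'i::finite \<Rightarrow> 'a"
  assumes irreducible: "irreducible_root_system Phi" and base: "is_base Phi alpha"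
begin

lemma finite_Phi: "finite Phi"
  and zero_notin_Phi: "0 \<notin> Phi"
  and span_Phi: "span Phi = UNIV"
  and refl_image_Phi: "a \<in> Phi \<Longrightarrow> refl a ` Phi = Phi"
  and Cartan_integer: "a \<in> Phi \<Longrightarrow> b \<in> Phi \<Longrightarrow> 2 * (b \<bullet> a) / (a \<bullet> a) \<in> \<int>"
  and reduced: "a \<in> Phi \<Longrightarrow> r *\<^sub>R a \<in> Phi \<Longrightarrow> r = 1 \<or> r = -1"
  using irreducible unfolding irreducible_root_system_def by simp_all

lemma refl_in_Phi: "a \<in> Phi \<Longrightarrow> b \<in> Phi \<Longrightarrow> refl a b \<in> Phi"
  using refl_image_Phi by blast

lemma alpha_in_Phi: "alpha i \<in> Phi"
  using base unfolding is_base_def by auto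

lemma alpha_nonzero: "alpha i \<noteq> 0"
  using alpha_in_Phi zero_notin_Phi by metis

lemma inner_alpha_self_pos: "alpha i \<bullet> alpha i > 0"
  using alpha_nonzero by simp

lemma root_integer_coeffs:
  assumes "b \<in> Phi"
  obtains u :: "'i \<Rightarrow> int" where "b = (\<Sum>i\<in>UNIV. of_int (u i) *\<^sub>R alpha i)"
    "(\<forall>i. u i \<ge> 0) \<or> (\<forall>i. u i \<le> 0)"
  using base assms unfolding is_base_def by blast

lemma span_alpha: "span (range alpha) = UNIV"
proof -
  have "Phi \<subseteq> span (range alpha)"
  proof
    fix b assume "b \<in> Phi"
    then obtain u :: "'i \<Rightarrow> int" where "b = (\<Sum>i\<in>UNIV. of_int (u i) *\<^sub>R alpha i)"
      by (rule root_integer_coeffs)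
    then show "b \<in> span (range alpha)" by (simp add: span_sum span_scale span_base)
  qed
  then have "span Phi \<subseteq> span (range alpha)" by (simp add: span_minimal)
  then show ?thesis using span_Phi by auto
qed

end

sublocale root_base \<subseteq> simple_coordinates alpha
  using base span_alpha unfolding is_base_def by unfold_locales auto

context root_base
begin

lemma weyl_group_image_Phi: "w \<in> weyl_group A \<Longrightarrow> A \<subseteq> Phi \<Longrightarrow> w ` Phi \<subseteq> Phi"
  using weyl_group_image_subset refl_in_Phi by blast

lemma finite_weyl_group:
  assumes "A \<subseteq> Phi"
  shows "finite (weyl_group A)"
proof -
  have "inj_on (\<lambda>w. restrict w Phi) (weyl_group A)"
  proof (rule inj_onI)
    fix w v assume w: "w \<in> weyl_group A" and v: "v \<in> weyl_group A"
      and eq: "restrict w Phi = restrict v Phi"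
    have "w x = v x" for x
    proof (rule linear_eq_on[OF weyl_group_isometry(1)[OF w] weyl_group_isometry(1)[OF v]])
      show "x \<in> span Phi" using span_Phi by auto
      show "\<And>b. b \<in> Phi \<Longrightarrow> w b = v b" using eq by (metis restrict_apply')
    qed
    then show "w = v" by auto
  qed
  moreover have "(\<lambda>w. restrict w Phi) ` weyl_group A \<subseteq> Phi \<rightarrow>\<^sub>E Phi"
  proof
    fix f assume "f \<in> (\<lambda>w. restrict w Phi) ` weyl_group A"
    then obtain w where "w \<in> weyl_group A" "f = restrict w Phi" by auto
    then show "f \<in> Phi \<rightarrow>\<^sub>E Phi" using weyl_group_image_Phi[OF _ assms, of w] by auto
  qed
  moreover have "finite (Phi \<rightarrow>\<^sub>E Phi)" using finite_Phi by (simp add: finite_PiE)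
  ultimately show ?thesis using finite_imageD finite_subset by metis
qed

lemma weyl_orbit_sum_eq_0:
  assumes "A \<subseteq> Phi" "y \<in> span A"
  shows "(\<Sum>w\<in>weyl_group A. w y) = 0"
proof -
  define v where "v = (\<Sum>w\<in>weyl_group A. w y)"
  have "v \<bullet> a = 0" if a: "a \<in> A" for a
  proof -
    have "refl a v = (\<Sum>w\<in>weyl_group A. refl a (w y))"
      unfolding v_def by (rule linear_sum[OF linear_refl])
    also have "\<dots> = v" unfolding v_def
      by (rule sum.reindex_bij_witness[of _ "\<lambda>w. refl a \<circ> w" "\<lambda>w. refl a \<circ> w"])
        (simp_all add: fun_eq_iff refl_refl weyl_step[OF _ a])
    finally show ?thesis
      using orthogonal_if_refl_fixed a assms(1) zero_notin_Phi by blast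
  qed
  moreover have "v \<in> span A"
    unfolding v_def using assms(2) weyl_group_span_closed by (blast intro: span_sum)
  ultimately have "orthogonal v v"
    using orthogonal_to_span[of v A v] by (simp add: orthogonal_def)
  then show ?thesis by (simp add: v_def orthogonal_self)
qed

lemma coeff_eq_0_if_orbit_nonneg:
  assumes y: "y \<in> span (alpha ` L)" and l: "l \<in> L"
    and nonneg: "\<And>w. w \<in> weyl_group (alpha ` L) \<Longrightarrow> c (w y) l \<ge> 0"
  shows "c y l = 0"
proof -
  have sub: "alpha ` L \<subseteq> Phi" using alpha_in_Phi by auto
  note fin = finite_weyl_group[OF sub]
  have "(\<Sum>w\<in>weyl_group (alpha ` L). c (w y) l) = c (\<Sum>w\<in>weyl_group (alpha ` L). w y) l"
    by (simp only: coeff_of_sum[OF fin])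
  also have "\<dots> = 0" by (simp add: weyl_orbit_sum_eq_0[OF sub y] coeff_of_0)
  finally have "\<forall>w\<in>weyl_group (alpha ` L). c (w y) l = 0"
    using sum_nonneg_eq_0_iff[OF fin, of "\<lambda>w. c (w y) l"] nonneg by simp
  then show ?thesis by (metis weyl_id id_apply)
qed

lemma root_coeffs:
  assumes "b \<in> Phi"
  shows "\<forall>j. c b j \<in> \<int>" and "in_pos_cone b \<or> in_pos_cone (- b)"
proof -
  obtain u :: "'i \<Rightarrow> int" where b: "b = (\<Sum>i\<in>UNIV. of_int (u i) *\<^sub>R alpha i)"
    and sign: "(\<forall>i. u i \<ge> 0) \<or> (\<forall>i. u i \<le> 0)"
    using assms by (rule root_integer_coeffs)
  have cb: "c b = (\<lambda>i. of_int (u i))" using coeff_of_eqI[OF b] .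
  show "\<forall>j. c b j \<in> \<int>" by (simp add: cb)
  show "in_pos_cone b \<or> in_pos_cone (- b)"
    using sign coeff_of_scaleR[of "-1" b] by (simp add: in_pos_cone_def cb)
qed

abbreviation s :: "'i \<Rightarrow> 'a \<Rightarrow> 'a" where "s i \<equiv> refl (alpha i)"

lemma coeff_of_s:
  "c (s i x) j = c x j - (if j = i then 2 * (x \<bullet> alpha i) / (alpha i \<bullet> alpha i) else 0)"
  by (simp add: refl_def coeff_of_diff coeff_of_scaleR coeff_of_alpha)

lemma inner_simple_roots_nonpos:
  assumes "i \<noteq> j"
  shows "alpha i \<bullet> alpha j \<le> 0"
proof (rule ccontr)
  assume "\<not> ?thesis"
  then have "2 * (alpha j \<bullet> alpha i) / (alpha i \<bullet> alpha i) > 0"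
    using inner_alpha_self_pos[of i] by (simp add: inner_commute)
  then have "c (s i (alpha j)) j > 0" "c (s i (alpha j)) i < 0"
    using assms by (simp_all add: coeff_of_s coeff_of_alpha)
  moreover have "in_pos_cone (s i (alpha j)) \<or> in_pos_cone (- s i (alpha j))"
    using root_coeffs(2) refl_in_Phi alpha_in_Phi by blast
  ultimately show False
    by (auto simp: in_pos_cone_def coeff_of_scaleR[of "-1", simplified] dest: spec[of _ i] spec[of _ j])
qed

lemma in_pos_cone_s:
  assumes b: "b \<in> Phi" "in_pos_cone b" "b \<noteq> alpha i"
  shows "in_pos_cone (s i b)"
proof -
  have "\<exists>j. j \<noteq> i \<and> c b j > 0"
  proof (rule ccontr)
    assume "\<not> ?thesis"
    then have z: "\<forall>j. j \<noteq> i \<longrightarrow> c b j = 0"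
      using b unfolding in_pos_cone_def by (metis less_eq_real_def)
    have "b = (\<Sum>j\<in>UNIV. c b j *\<^sub>R alpha j)" by (rule coeff_of_repr)
    also have "\<dots> = c b i *\<^sub>R alpha i" by (subst sum.remove[of _ i]) (auto simp: z)
    finally have beq: "b = c b i *\<^sub>R alpha i" .
    then have "c b i = 1 \<or> c b i = -1" using reduced alpha_in_Phi b(1) by metis
    moreover have "c b i \<ge> 0" using b unfolding in_pos_cone_def by auto
    ultimately show False using beq b(3) by auto
  qed
  then obtain j where j: "j \<noteq> i" "c b j > 0" by blast
  then have "c (s i b) j > 0" by (simp add: coeff_of_s)
  then have "\<not> in_pos_cone (- s i b)"
    by (simp add: in_pos_cone_def coeff_of_scaleR[of "-1", simplified] not_le exI[of _ j])
  then show ?thesis using root_coeffs(2)[OF refl_in_Phi[OF alpha_in_Phi b(1)]] by blast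
qed

definition simple_word :: "'i list \<Rightarrow> 'a \<Rightarrow> 'a" where
  "simple_word ws = foldr (\<lambda>i f. s i \<circ> f) ws id"

lemma simple_word_Nil [simp]: "simple_word [] = id"
  and simple_word_Cons [simp]: "simple_word (i # ws) = s i \<circ> simple_word ws"
  by (simp_all add: simple_word_def)

lemma simple_word_append [simp]: "simple_word (ws @ vs) = simple_word ws \<circ> simple_word vs"
  by (induction ws) auto

lemma simple_word_in_weyl_group: "simple_word ws \<in> weyl_group Phi"
proof (induction ws)
  case Nil
  then show ?case by (simp only: simple_word_Nil weyl_id)
next
  case (Cons i ws)
  then show ?case by (simp only: simple_word_Cons) (rule weyl_step[OF _ alpha_in_Phi])
qed

lemma linear_simple_word: "linear (simple_word ws)"
  and inner_simple_word: "simple_word ws x \<bullet> simple_word ws y = x \<bullet> y"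
  and simple_word_in_Phi: "b \<in> Phi \<Longrightarrow> simple_word ws b \<in> Phi"
  using weyl_group_isometry[OF simple_word_in_weyl_group]
    weyl_group_image_Phi[OF simple_word_in_weyl_group] by blast+

lemma simple_word_rev: "simple_word ws (simple_word (rev ws) x) = x"
  by (induction ws arbitrary: x rule: rev_induct) (auto simp: refl_refl)

lemma refl_simple_word_alpha: "refl (simple_word ws (alpha i)) = simple_word (ws @ [i] @ rev ws)"
proof
  fix y
  have "refl (simple_word ws (alpha i)) y
      = refl (simple_word ws (alpha i)) (simple_word ws (simple_word (rev ws) y))"
    by (simp add: simple_word_rev)
  also have "\<dots> = simple_word ws (s i (simple_word (rev ws) y))"
    by (rule refl_conjugate[OF linear_simple_word inner_simple_word])
  finally show "refl (simple_word ws (alpha i)) y = simple_word (ws @ [i] @ rev ws) y" by simp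
qed

lemma height_integer: "b \<in> Phi \<Longrightarrow> height b \<in> \<int>"
  unfolding height_def using root_coeffs(1) by (auto intro: Ints_sum)

lemma ex_inner_simple_root_pos:
  assumes "b \<in> Phi" "in_pos_cone b"
  obtains j where "b \<bullet> alpha j > 0"
proof -
  have "0 < b \<bullet> b" using assms zero_notin_Phi by auto
  also have "b \<bullet> b = (\<Sum>j\<in>UNIV. c b j * (alpha j \<bullet> b))" by (rule inner_eq_coeff_sum)
  finally obtain j where "c b j * (alpha j \<bullet> b) > 0" by (meson not_le sum_nonpos)
  moreover have "c b j \<ge> 0" using assms(2) in_pos_cone_def by auto
  ultimately have "b \<bullet> alpha j > 0" by (simp add: zero_less_mult_iff inner_commute)
  then show thesis by (rule that)
qed

lemma pos_root_conj_simple: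
  assumes "b \<in> Phi" "in_pos_cone b"
  shows "\<exists>ws i. b = simple_word ws (alpha i)"
  using assms
proof (induction "nat \<lfloor>height b\<rfloor>" arbitrary: b rule: less_induct)
  case less
  show ?case
  proof (cases "\<exists>i. b = alpha i")
    case True
    then show ?thesis by (metis simple_word_Nil id_apply)
  next
    case False
    obtain j where bj: "b \<bullet> alpha j > 0" using ex_inner_simple_root_pos[OF less.prems] .
    define k where "k = 2 * (b \<bullet> alpha j) / (alpha j \<bullet> alpha j)"
    have "k \<in> \<int>" unfolding k_def by (rule Cartan_integer[OF alpha_in_Phi less.prems(1)])
    then obtain k' where k': "k = of_int k'" by (elim Ints_cases)
    have "k > 0" using bj inner_alpha_self_pos[of j] by (simp add: k_def)
    have b': "s j b \<in> Phi" "in_pos_cone (s j b)"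
      using refl_in_Phi alpha_in_Phi in_pos_cone_s False less.prems by auto
    have "height (s j b) = height b - k"
      unfolding height_def coeff_of_s k_def[symmetric] by (simp add: sum_subtractf)
    moreover have "height (s j b) \<ge> 0"
      using b'(2) unfolding height_def in_pos_cone_def by (simp add: sum_nonneg)
    moreover have "height b \<in> \<int>" using height_integer less.prems(1) .
    ultimately have "nat \<lfloor>height (s j b)\<rfloor> < nat \<lfloor>height b\<rfloor>"
      using \<open>k > 0\<close> by (auto simp: k' elim!: Ints_cases)
    then obtain ws i where "s j b = simple_word ws (alpha i)" using less.hyps b' by blast
    then have "b = simple_word (j # ws) (alpha i)" by (metis comp_apply simple_word_Cons refl_refl)
    then show ?thesis by blast
  qed
qed

lemma refl_root_eq_simple_word:
  assumes "b \<in> Phi"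
  obtains ws where "refl b = simple_word ws"
proof (cases "in_pos_cone b")
  case True
  then show thesis using pos_root_conj_simple[OF assms] refl_simple_word_alpha that by metis
next
  case False
  then have "in_pos_cone (- b)" using root_coeffs(2)[OF assms] by blast
  moreover have "- b \<in> Phi"
    using refl_in_Phi[OF assms assms] refl_self[of b] assms zero_notin_Phi by metis
  ultimately show thesis
    using pos_root_conj_simple refl_simple_word_alpha refl_uminus that by metis
qed

lemma weyl_group_eq_simple_word:
  assumes "w \<in> weyl_group Phi"
  obtains ws where "w = simple_word ws"
  using assms
proof (induction arbitrary: thesis rule: weyl_group.induct)
  case weyl_id
  then show ?case by (metis simple_word_Nil)
next
  case (weyl_step w a)
  obtain ws where "w = simple_word ws" using weyl_step.IH by blast
  moreover obtain vs where "refl a = simple_word vs"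
    using refl_root_eq_simple_word[OF weyl_step.hyps(2)] by blast
  ultimately have "refl a \<circ> w = simple_word (vs @ ws)" by simp
  then show ?case by (rule weyl_step.prems)
qed

text \<open>At the last position \<open>k\<close> where \<open>simple_word (drop k ws) (alpha t)\<close> is not positive,
  the letter \<open>j = ws ! k\<close> must be the one turning \<open>alpha j\<close> negative, so the suffix \<open>u\<close>
  after \<open>k\<close> maps \<open>alpha t\<close> to \<open>alpha j\<close>; hence \<open>s j \<circ> u \<circ> s t = u\<close> and both letters
  \<open>j\<close> and \<open>t\<close> can be dropped.\<close>
lemma deletion_condition:
  assumes not_pos: "\<not> in_pos_cone (simple_word ws (alpha t))"
  shows "\<exists>vs. length vs \<le> length ws \<and> simple_word vs = simple_word (ws @ [t])"
proof -
  define \<beta> where "\<beta> k = simple_word (drop k ws) (alpha t)" for k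
  define K where "K = {k. k \<le> length ws \<and> \<not> in_pos_cone (\<beta> k)}"
  define k where "k = Max K"
  have "0 \<in> K" "finite K" using not_pos by (simp_all add: K_def \<beta>_def)
  then have "k \<in> K" and k_max: "\<And>k'. k' \<in> K \<Longrightarrow> k' \<le> k"
    unfolding k_def by (metis Max_in empty_iff, simp)
  moreover have "k \<noteq> length ws" using \<open>k \<in> K\<close> in_pos_cone_alpha by (auto simp: K_def \<beta>_def)
  ultimately have k_less: "k < length ws" by (simp add: K_def)
  have pos_suc: "in_pos_cone (\<beta> (Suc k))"
    using k_max[of "Suc k"] k_less by (force simp: K_def)
  define j where "j = ws ! k"
  define u where "u = simple_word (drop (Suc k) ws)"
  have drop_k: "drop k ws = j # drop (Suc k) ws"
    using k_less by (simp add: j_def Cons_nth_drop_Suc)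
  have "\<not> in_pos_cone (s j (\<beta> (Suc k)))"
    using \<open>k \<in> K\<close> by (simp add: K_def \<beta>_def drop_k)
  then have u_alpha: "u (alpha t) = alpha j"
    using in_pos_cone_s[OF _ pos_suc] simple_word_in_Phi alpha_in_Phi by (auto simp: u_def \<beta>_def)
  have key: "s j \<circ> u \<circ> s t = u"
  proof
    fix y
    have "s j (u (s t y)) = u (s t (s t y))"
      using refl_conjugate[OF linear_simple_word inner_simple_word] u_alpha by (metis u_def)
    then show "(s j \<circ> u \<circ> s t) y = u y" by (simp add: refl_refl)
  qed
  have ws_split: "ws = take k ws @ j # drop (Suc k) ws"
    using drop_k by (metis append_take_drop_id)
  have "simple_word (ws @ [t]) = simple_word (take k ws) \<circ> (s j \<circ> u \<circ> s t)"
    by (subst ws_split) (simp add: u_def o_assoc)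
  also have "\<dots> = simple_word (take k ws @ drop (Suc k) ws)" by (simp only: key) (simp add: u_def)
  finally have "simple_word (ws @ [t]) = simple_word (take k ws @ drop (Suc k) ws)" .
  then show ?thesis using k_less by (intro exI[of _ "take k ws @ drop (Suc k) ws"]) auto
qed

definition reduced_word :: "'i list \<Rightarrow> bool" where
  "reduced_word ws \<longleftrightarrow> (\<forall>vs. simple_word vs = simple_word ws \<longrightarrow> length ws \<le> length vs)"

lemma reduced_word_butlast: "reduced_word (ws @ [t]) \<Longrightarrow> reduced_word ws"
  unfolding reduced_word_def by (metis simple_word_append length_append_singleton not_less_eq_eq)

lemma reduced_word_in_pos_cone:
  "reduced_word (ws @ [t]) \<Longrightarrow> in_pos_cone (simple_word ws (alpha t))"
  unfolding reduced_word_def using deletion_condition by fastforce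

lemma ex_reduced_word: "\<exists>ws. simple_word ws = simple_word vs \<and> reduced_word ws"
proof -
  define P where "P n \<longleftrightarrow> (\<exists>ws. length ws = n \<and> simple_word ws = simple_word vs)" for n
  have "P (Least P)" by (rule LeastI[of P "length vs"]) (auto simp: P_def)
  then obtain ws where ws: "length ws = Least P" "simple_word ws = simple_word vs"
    by (auto simp: P_def)
  then have "reduced_word ws" unfolding reduced_word_def by (metis (mono_tags) P_def Least_le)
  then show ?thesis using ws by blast
qed

end

section \<open>Connected subdiagrams of the extended Dynkin diagram\<close>

lemma component_of_step:
  "u \<in> component_of adj S v \<Longrightarrow> w \<in> S \<Longrightarrow> adj u w \<Longrightarrow> w \<in> component_of adj S v"
  unfolding component_of_def induced_rel_def by (auto intro: rtrancl_into_rtrancl)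

lemma connected_component_of:
  assumes sym: "\<And>u w. adj u w = adj w u" and "v \<in> S"
  shows "connected_sub adj (component_of adj S v)"
proof -
  define C where "C = component_of adj S v"
  define R where "R = induced_rel adj C"
  have reach: "(v, w) \<in> R\<^sup>*" if "(v, w) \<in> (induced_rel adj S)\<^sup>*" for w
    using that
  proof (induction rule: rtrancl_induct)
    case (step y z)
    then have "y \<in> C" "z \<in> C"
      unfolding C_def component_of_def induced_rel_def by (auto intro: rtrancl_into_rtrancl)
    then have "(y, z) \<in> R" using step(2) by (auto simp: R_def induced_rel_def)
    then show ?case using step(3) by (rule rtrancl_into_rtrancl[rotated])
  qed simp
  have "sym (R\<^sup>*)"
    by (rule sym_rtrancl) (auto simp: sym_def R_def induced_rel_def sym)
  have "(u, w) \<in> R\<^sup>*" if "u \<in> C" "w \<in> C" for u w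
  proof -
    have "(v, u) \<in> R\<^sup>*" "(v, w) \<in> R\<^sup>*" using that reach unfolding C_def component_of_def by auto
    then show ?thesis using \<open>sym (R\<^sup>*)\<close> by (meson rtrancl_trans symD)
  qed
  moreover have "v \<in> C" using assms(2) by (simp add: C_def component_of_def)
  ultimately show ?thesis unfolding connected_sub_def R_def C_def by blast
qed

lemma component_of_connected_sub:
  "connected_sub adj S \<Longrightarrow> v \<in> S \<Longrightarrow> component_of adj S v = S"
  unfolding connected_sub_def component_of_def by auto

lemma ext_adj_sym: "ext_adj alpha lam u v = ext_adj alpha lam v u"
  by (cases u; cases v) (auto simp: ext_adj_def inner_commute)

lemma None_in_ext_component: "None \<in> ext_component alpha lam I"
  unfolding ext_component_def component_of_def by simp

lemma ext_component_notin:
  "Some i \<in> ext_component alpha lam I \<Longrightarrow> i \<notin> I"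
  unfolding ext_component_def component_of_def by auto

lemma ext_component_step:
  "u \<in> ext_component alpha lam I \<Longrightarrow> l \<notin> I \<Longrightarrow> ext_adj alpha lam u (Some l) \<Longrightarrow>
    Some l \<in> ext_component alpha lam I"
  unfolding ext_component_def by (rule component_of_step) auto

lemma range_ext_component: "range (ext_component alpha lam) = conn_subdiagrams_ext alpha lam"
proof (intro set_eqI iffI)
  fix S assume "S \<in> range (ext_component alpha lam)"
  then obtain I where "S = ext_component alpha lam I" by blast
  then show "S \<in> conn_subdiagrams_ext alpha lam"
    using connected_component_of[of "ext_adj alpha lam", OF ext_adj_sym] None_in_ext_component
    unfolding conn_subdiagrams_ext_def ext_component_def by simp
next
  fix S assume S: "S \<in> conn_subdiagrams_ext alpha lam"
  then have None_S: "None \<in> S" and conn: "connected_sub (ext_adj alpha lam) S"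
    by (auto simp: conn_subdiagrams_ext_def)
  have "insert None (Some ` (- {i. Some i \<notin> S})) = S"
  proof (intro set_eqI iffI)
    fix v assume "v \<in> S"
    then show "v \<in> insert None (Some ` (- {i. Some i \<notin> S}))" by (cases v) auto
  qed (use None_S in auto)
  then have "ext_component alpha lam {i. Some i \<notin> S} = S"
    using component_of_connected_sub[OF conn None_S] by (simp add: ext_component_def)
  then show "S \<in> range (ext_component alpha lam)" by (metis rangeI)
qed

section \<open>The weight polytope and its standard parabolic faces\<close>

locale dominant_weight = root_base +
  fixes lam :: 'a
  assumes dominant: "dominant_integral alpha lam"
begin

lemma inner_lam_alpha_nonneg: "lam \<bullet> alpha i \<ge> 0"
proof -
  have "2 * (lam \<bullet> alpha i) / (alpha i \<bullet> alpha i) \<ge> 0"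
    using dominant unfolding dominant_integral_def by (metis Nats_cases of_nat_0_le_iff)
  then show ?thesis using inner_alpha_self_pos[of i] by (simp add: zero_le_divide_iff)
qed

lemma in_pos_cone_lam_minus_reduced_word:
  "reduced_word ws \<Longrightarrow> in_pos_cone (lam - simple_word ws lam)"
proof (induction ws rule: rev_induct)
  case Nil
  then show ?case by (simp add: in_pos_cone_def coeff_of_0)
next
  case (snoc t ws)
  define m where "m = 2 * (lam \<bullet> alpha t) / (alpha t \<bullet> alpha t)"
  have "m \<ge> 0" using inner_lam_alpha_nonneg[of t] inner_alpha_self_pos[of t] by (simp add: m_def)
  have "simple_word (ws @ [t]) lam = simple_word ws lam - m *\<^sub>R simple_word ws (alpha t)"
    by (simp add: refl_def m_def linear_diff[OF linear_simple_word] linear_scale[OF linear_simple_word])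
  then have eq: "lam - simple_word (ws @ [t]) lam
      = (lam - simple_word ws lam) + m *\<^sub>R simple_word ws (alpha t)" by simp
  show ?case
    using snoc.IH[OF reduced_word_butlast[OF snoc.prems]] reduced_word_in_pos_cone[OF snoc.prems]
      \<open>m \<ge> 0\<close> unfolding in_pos_cone_def eq coeff_of_add coeff_of_scaleR by simp
qed

lemma coeff_weyl_lam_le: "w \<in> weyl_group Phi \<Longrightarrow> c (w lam) j \<le> c lam j"
  by (metis weyl_group_eq_simple_word ex_reduced_word in_pos_cone_lam_minus_reduced_word
      in_pos_cone_def coeff_of_diff diff_ge_0_iff_ge)

abbreviation P :: "'a set" where "P \<equiv> weight_polytope Phi lam"

lemma lam_in_polytope: "lam \<in> P"
  unfolding weight_polytope_def by (rule hull_inc) (auto intro: image_eqI[of _ _ id] weyl_id)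

lemma polytope_weyl_invariant:
  assumes w: "w \<in> weyl_group Phi" and x: "x \<in> P"
  shows "w x \<in> P"
proof -
  have "w ` P = convex hull (w ` (\<lambda>v. v lam) ` weyl_group Phi)"
    unfolding weight_polytope_def by (rule convex_hull_linear_image[OF weyl_group_isometry(1)[OF w]])
  also have "\<dots> \<subseteq> P"
    unfolding weight_polytope_def
    by (rule hull_mono) (auto intro!: image_eqI[of _ _ "w \<circ> _"] weyl_group_comp[OF w])
  finally show ?thesis using x by auto
qed

lemma s_in_polytope: "x \<in> P \<Longrightarrow> s i x \<in> P"
  using polytope_weyl_invariant refl_in_weyl_group alpha_in_Phi by blast

lemma coeff_polytope_le:
  assumes "x \<in> P"
  shows "c x j \<le> c lam j"
proof -
  obtain v where v: "\<And>x. c x j = v \<bullet> x" using coeff_of_eq_inner by blast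
  have "P \<subseteq> {x. v \<bullet> x \<le> c lam j}"
    unfolding weight_polytope_def
  proof (rule hull_minimal)
    show "convex {x. v \<bullet> x \<le> c lam j}" by (rule convex_halfspace_le)
  qed (auto simp: v[symmetric] coeff_weyl_lam_le)
  then show ?thesis using assms v by auto
qed

abbreviation "C \<equiv> ext_component alpha lam"

abbreviation "F \<equiv> F_face Phi alpha lam"

lemma F_faceI: "x \<in> P \<Longrightarrow> (\<And>i. i \<in> I \<Longrightarrow> c x i = c lam i) \<Longrightarrow> x \<in> F I"
  and F_faceD: "x \<in> F I \<Longrightarrow> x \<in> P" "x \<in> F I \<Longrightarrow> i \<in> I \<Longrightarrow> c x i = c lam i"
  unfolding F_face_def by auto

lemma F_face_face_of: "F I face_of P"
proof -
  obtain v where v: "\<And>j x. c x j = v j \<bullet> x" using coeff_of_eq_inner by metis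
  define a where "a = (\<Sum>i\<in>I. v i)"
  define b where "b = (\<Sum>i\<in>I. c lam i)"
  have a: "a \<bullet> x = (\<Sum>i\<in>I. c x i)" for x by (simp add: a_def v inner_sum_left)
  have le: "a \<bullet> x \<le> b" if "x \<in> P" for x
    unfolding a b_def using that by (intro sum_mono coeff_polytope_le)
  have "F I = P \<inter> {x. a \<bullet> x = b}"
  proof (intro set_eqI iffI)
    fix x assume x: "x \<in> P \<inter> {x. a \<bullet> x = b}"
    have "(\<Sum>i\<in>I. c lam i - c x i) = 0" using x unfolding a b_def by (simp add: sum_subtractf)
    moreover have "\<forall>i\<in>I. c lam i - c x i \<ge> 0" using coeff_polytope_le x by auto
    ultimately have "\<forall>i\<in>I. c x i = c lam i" by (simp add: sum_nonneg_eq_0_iff)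
    then show "x \<in> F I" using x by (auto intro: F_faceI)
  qed (auto simp: F_face_def a b_def)
  then show ?thesis
    by (metis face_of_Int_supporting_hyperplane_le convex_convex_hull weight_polytope_def le)
qed

lemma inner_lam_alpha_outside_component:
  assumes "l \<notin> I" "Some l \<notin> C I"
  shows "lam \<bullet> alpha l = 0"
proof (rule ccontr)
  assume "lam \<bullet> alpha l \<noteq> 0"
  then have "ext_adj alpha lam None (Some l)"
    using inner_lam_alpha_nonneg[of l] by (simp add: ext_adj_def)
  then have "Some l \<in> C I" by (rule ext_component_step[OF None_in_ext_component assms(1)])
  then show False using assms(2) by contradiction
qed

lemma inner_alpha_across_component:
  assumes "Some k \<in> C I" "l \<notin> I" "Some l \<notin> C I"
  shows "alpha k \<bullet> alpha l = 0"
proof (rule ccontr)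
  assume "alpha k \<bullet> alpha l \<noteq> 0"
  moreover have "k \<noteq> l" using assms by auto
  ultimately have "ext_adj alpha lam (Some k) (Some l)" by (simp add: ext_adj_def)
  then have "Some l \<in> C I" by (rule ext_component_step[OF assms(1,2)])
  then show False using assms(3) by contradiction
qed

lemma F_face_coeff_outside_component:
  assumes x: "x \<in> F I" and l0: "Some l0 \<notin> C I"
  shows "c x l0 = c lam l0"
proof (cases "l0 \<in> I")
  case True
  then show ?thesis using F_faceD(2)[OF x] by blast
next
  case False
  define L where "L = {l. l \<notin> I \<and> Some l \<notin> C I}"
  define d where "d = c (lam - x)"
  define \<beta>1 where "\<beta>1 = (\<Sum>j\<in>UNIV. (if j \<in> L then 0 else d j) *\<^sub>R alpha j)"
  define \<beta>2 where "\<beta>2 = (\<Sum>j\<in>UNIV. (if j \<in> L then d j else 0) *\<^sub>R alpha j)"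
  have c\<beta>1: "c \<beta>1 = (\<lambda>j. if j \<in> L then 0 else d j)" by (rule coeff_of_eqI) (simp add: \<beta>1_def)
  have "lam - x = (\<Sum>j\<in>UNIV. d j *\<^sub>R alpha j)" unfolding d_def by (rule coeff_of_repr)
  also have "\<dots> = \<beta>1 + \<beta>2"
    unfolding \<beta>1_def \<beta>2_def sum.distrib[symmetric] scaleR_add_left[symmetric]
    by (rule sum.cong) auto
  finally have x_eq: "x = lam - \<beta>1 - \<beta>2" by (simp add: algebra_simps)
  have d_I: "d i = 0" if "i \<in> I" for i
    using F_faceD(2)[OF x that] by (simp add: d_def coeff_of_diff)
  have \<beta>1_orth: "\<beta>1 \<bullet> alpha l = 0" if "l \<in> L" for l
    unfolding inner_eq_coeff_sum[of \<beta>1] c\<beta>1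
    using that d_I inner_alpha_across_component by (intro sum.neutral) (auto simp: L_def)
  have "\<beta>2 \<in> span (alpha ` L)"
    unfolding \<beta>2_def by (intro span_sum) (auto intro: span_scale span_base span_zero)
  moreover have "c (w \<beta>2) l \<ge> 0" if w: "w \<in> weyl_group (alpha ` L)" and l: "l \<in> L" for w l
  proof -
    have wW: "w \<in> weyl_group Phi" using weyl_group_mono[OF w] alpha_in_Phi by blast
    have "w lam = lam"
      using weyl_group_fixes_orthogonal[OF w] inner_lam_alpha_outside_component by (auto simp: L_def)
    moreover have "w \<beta>1 = \<beta>1" using weyl_group_fixes_orthogonal[OF w] \<beta>1_orth by auto
    ultimately have "w x = lam - \<beta>1 - w \<beta>2"
      unfolding x_eq by (simp add: linear_diff[OF weyl_group_isometry(1)[OF wW]])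
    then have "c (lam - \<beta>1 - w \<beta>2) l \<le> c lam l"
      using coeff_polytope_le[OF polytope_weyl_invariant[OF wW F_faceD(1)[OF x]]] by metis
    then show ?thesis using l by (simp add: coeff_of_diff c\<beta>1)
  qed
  moreover have "l0 \<in> L" using False l0 by (simp add: L_def)
  ultimately have "c \<beta>2 l0 = 0" using coeff_eq_0_if_orbit_nonneg[of \<beta>2 L l0] by blast
  moreover have "c \<beta>2 = (\<lambda>j. if j \<in> L then d j else 0)" by (rule coeff_of_eqI) (simp add: \<beta>2_def)
  ultimately show ?thesis using \<open>l0 \<in> L\<close> by (simp add: d_def coeff_of_diff)
qed

lemma s_lowers_coeff_in_F_face:
  assumes x: "x \<in> F I" and k: "k \<notin> I" and pos: "x \<bullet> alpha k > 0"
  shows "s k x \<in> F I" and "c (s k x) k < c x k"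
proof -
  show "s k x \<in> F I"
    using F_faceD[OF x] k by (intro F_faceI s_in_polytope) (auto simp: coeff_of_s)
  show "c (s k x) k < c x k"
    using pos inner_alpha_self_pos[of k] by (simp add: coeff_of_s)
qed

lemma inner_alpha_gt_if_neighbour_coeff_lt:
  assumes x: "x \<in> P" and jk: "j \<noteq> k" "alpha j \<bullet> alpha k \<noteq> 0"
    and lt: "c x j < c lam j" and eq: "c x k = c lam k"
  shows "lam \<bullet> alpha k < x \<bullet> alpha k"
proof -
  define d where "d = c (lam - x)"
  have d_nonneg: "d t \<ge> 0" for t using coeff_polytope_le[OF x] by (simp add: d_def coeff_of_diff)
  have "d j * (alpha j \<bullet> alpha k) < 0"
    using lt jk inner_simple_roots_nonpos[OF jk(1)] by (simp add: d_def coeff_of_diff mult_pos_neg)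
  moreover have "d t * (alpha t \<bullet> alpha k) \<le> 0" for t
    using eq d_nonneg[of t] inner_simple_roots_nonpos[of t k]
    by (cases "t = k") (auto simp: d_def coeff_of_diff mult_nonneg_nonpos)
  ultimately have "(\<Sum>t\<in>UNIV. d t * (alpha t \<bullet> alpha k)) < 0"
    by (metis (no_types, lifting) UNIV_I finite sum_nonpos sum.remove add_neg_nonpos)
  moreover have "(lam - x) \<bullet> alpha k = (\<Sum>t\<in>UNIV. d t * (alpha t \<bullet> alpha k))"
    unfolding d_def by (rule inner_eq_coeff_sum)
  ultimately show ?thesis by (simp add: inner_diff_left)
qed

lemma F_face_coeff_lt_in_component:
  assumes "Some k \<in> C I"
  shows "\<exists>x\<in>F I. c x k < c lam k"
proof -
  let ?S = "insert None (Some ` (- I))"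
  have "(None, v) \<in> (induced_rel (ext_adj alpha lam) ?S)\<^sup>* \<Longrightarrow> v = Some k \<Longrightarrow>
    \<exists>x\<in>F I. c x k < c lam k" for v k
  proof (induction arbitrary: k rule: rtrancl_induct)
    case (step y z)
    then have kI: "k \<notin> I" and adj: "ext_adj alpha lam y (Some k)"
      by (auto simp: induced_rel_def)
    have lam_F: "lam \<in> F I" by (simp add: F_faceI lam_in_polytope)
    show ?case
    proof (cases y)
      case None
      then have "lam \<bullet> alpha k > 0" using adj by (simp add: ext_adj_def)
      then show ?thesis using s_lowers_coeff_in_F_face[OF lam_F kI] by blast
    next
      case (Some j)
      obtain x where x: "x \<in> F I" "c x j < c lam j" using step.IH Some by blast
      show ?thesis
      proof (cases "c x k < c lam k")
        case False
        then have "c x k = c lam k" using coeff_polytope_le[OF F_faceD(1)[OF x(1)], of k] by simp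
        then have "x \<bullet> alpha k > 0"
          using inner_alpha_gt_if_neighbour_coeff_lt[OF F_faceD(1)[OF x(1)] _ _ x(2)] adj Some
            inner_lam_alpha_nonneg[of k] by (fastforce simp: ext_adj_def)
        then show ?thesis using s_lowers_coeff_in_F_face[OF x(1) kI] \<open>c x k = c lam k\<close> by auto
      qed (use x in blast)
    qed
  qed simp
  moreover have "(None, Some k) \<in> (induced_rel (ext_adj alpha lam) ?S)\<^sup>*"
    using assms by (simp add: ext_component_def component_of_def)
  ultimately show ?thesis by blast
qed

lemma F_face_subset_iff: "F I \<subseteq> F J \<longleftrightarrow> C I \<subseteq> C J"
proof
  assume sub: "F I \<subseteq> F J"
  show "C I \<subseteq> C J"
  proof
    fix v assume v: "v \<in> C I"
    show "v \<in> C J"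
    proof (cases v)
      case None
      then show ?thesis using None_in_ext_component by simp
    next
      case (Some k)
      then obtain x where x: "x \<in> F I" "c x k < c lam k"
        using F_face_coeff_lt_in_component v by blast
      show ?thesis
      proof (rule ccontr)
        assume "v \<notin> C J"
        then have "Some k \<notin> C J" using Some by simp
        moreover have "x \<in> F J" using sub x(1) by (rule subsetD)
        ultimately have "c x k = c lam k" using F_face_coeff_outside_component by blast
        then show False using x(2) by simp
      qed
    qed
  qed
next
  assume sub: "C I \<subseteq> C J"
  show "F I \<subseteq> F J"
  proof
    fix x assume x: "x \<in> F I"
    show "x \<in> F J"
    proof (rule F_faceI[OF F_faceD(1)[OF x]])
      fix i assume "i \<in> J"
      then have "Some i \<notin> C J" using ext_component_notin by metis
      then have "Some i \<notin> C I" using sub by blast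
      then show "c x i = c lam i" by (rule F_face_coeff_outside_component[OF x])
    qed
  qed
qed

end

lemma order_iso_of_subset_iff:
  assumes "\<And>i j. F i \<subseteq> F j \<longleftrightarrow> G i \<subseteq> G j"
  shows "\<exists>\<phi>. bij_betw \<phi> (range F) (range G) \<and> (\<forall>i. \<phi> (F i) = G i)
           \<and> (\<forall>A\<in>range F. \<forall>B\<in>range F. A \<subseteq> B \<longleftrightarrow> \<phi> A \<subseteq> \<phi> B)"
proof -
  have F_eq: "F i = F j \<longleftrightarrow> G i = G j" for i j using assms by (metis subset_antisym order_refl)
  define \<phi> where "\<phi> A = G (SOME i. A = F i)" for A
  have \<phi>: "\<phi> (F i) = G i" for i
    unfolding \<phi>_def using someI[of "\<lambda>j. F i = F j" i] F_eq by metis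
  have "inj_on \<phi> (range F)" by (rule inj_onI) (metis \<phi> F_eq rangeE)
  moreover have "\<phi> ` range F = range G" by (auto simp: \<phi> image_image)
  ultimately have "bij_betw \<phi> (range F) (range G)" unfolding bij_betw_def ..
  then show ?thesis using \<phi> assms by (intro exI[of _ \<phi>]) auto
qed

theorem theorem4p5:
  fixes Phi :: "'a::euclidean_space set" and alpha :: "'i::finite \<Rightarrow> 'a" and lam :: 'a
  assumes "irreducible_root_system Phi"
    and "is_base Phi alpha"
    and "dominant_integral alpha lam"
  shows "\<exists>\<phi>. bij_betw \<phi> (std_parabolic_faces Phi alpha lam) (conn_subdiagrams_ext alpha lam)
           \<and> (\<forall>I. \<phi> (F_face Phi alpha lam I) = ext_component alpha lam I)
           \<and> (\<forall>F\<in>std_parabolic_faces Phi alpha lam. \<forall>G\<in>std_parabolic_faces Phi alpha lam.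
                F \<subseteq> G \<longleftrightarrow> \<phi> F \<subseteq> \<phi> G)"
proof -
  interpret dominant_weight Phi alpha lam
    using assms by unfold_locales
  have "std_parabolic_faces Phi alpha lam = range (F_face Phi alpha lam)"
    unfolding std_parabolic_faces_def using F_face_face_of by auto
  then show ?thesis
    unfolding range_ext_component[symmetric]
    by (simp only:) (rule order_iso_of_subset_iff, rule F_face_subset_iff)
qed

end
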